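(* Let $H$ be a graph with tree-width $k-1$ and let $(\{X_i\mid i\in I\},T=(I,F))$ be a tree-decomposition of $H$ of width $k-1$. For an integer $r\ge0$ and $i\in I$ let $X_i^{(r)}=D_r(X_i,H):=\bigcup_{x\in X_i}D_r(x,H)$. Then for every integer $r\ge0$, $(\{X_i^{(r)}\mid i\in I\},T=(I,F))$ is a tree-decomposition of $H$ with $k$-breadth at most $r$.
   Context: Graphs are finite, connected, unweighted, undirected and simple; $d_H$ is the shortest-path distance and $D_r(x,H)=\{u: d_H(u,x)\le r\}$. A tree-decomposition of $H=(V,E)$ is a pair $(\{X_i\mid i\in I\},T=(I,F))$ with $T$ a tree and bags $X_i\subseteq V$ such that (1) $\bigcup_i X_i=V$; (2) every edge lies in some bag; (3) for each $v\in V$ the nodes containing $v$ induce a connected subtree of $T$. Its width is $\max_i|X_i|-1$, and the tree-width of $H$ is the minimum width over all its tree-decompositions. The $k$-breadth of a tree-decomposition is the minimum integer $r$ such that every bag is contained in a union of at most $k$ disks of $H$ of radius $r$. *)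

theory Defs
  imports Main
begin

definition simple_graph :: "'a set \<Rightarrow> 'a set set \<Rightarrow> bool" where
  "simple_graph V E \<longleftrightarrow> (\<forall>e\<in>E. e \<subseteq> V \<and> card e = 2)"

definition is_walk :: "'a set set \<Rightarrow> 'a list \<Rightarrow> bool" where
  "is_walk E xs \<longleftrightarrow> xs \<noteq> [] \<and> (\<forall>j. Suc j < length xs \<longrightarrow> {xs ! j, xs ! Suc j} \<in> E)"

definition connected_on :: "'a set set \<Rightarrow> 'a set \<Rightarrow> bool" where
  "connected_on E S \<longleftrightarrow> (\<forall>u\<in>S. \<forall>v\<in>S. \<exists>xs. is_walk E xs \<and> set xs \<subseteq> S \<and> hd xs = u \<and> last xs = v)"

definition conn_graph :: "'a set \<Rightarrow> 'a set set \<Rightarrow> bool" where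
  "conn_graph V E \<longleftrightarrow> finite V \<and> V \<noteq> {} \<and> simple_graph V E \<and> connected_on E V"

definition has_cycle :: "'a set \<Rightarrow> 'a set set \<Rightarrow> bool" where
  "has_cycle V E \<longleftrightarrow> (\<exists>xs. distinct xs \<and> length xs \<ge> 3 \<and> set xs \<subseteq> V \<and> is_walk E xs
      \<and> {last xs, hd xs} \<in> E)"

definition is_tree :: "'i set \<Rightarrow> 'i set set \<Rightarrow> bool" where
  "is_tree I F \<longleftrightarrow> conn_graph I F \<and> \<not> has_cycle I F"

definition gdist :: "'a set \<Rightarrow> 'a set set \<Rightarrow> 'a \<Rightarrow> 'a \<Rightarrow> nat" where
  "gdist V E u v = (LEAST n. \<exists>xs. is_walk E xs \<and> set xs \<subseteq> V \<and> hd xs = u \<and> last xs = v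
      \<and> length xs = Suc n)"

definition disk :: "'a set \<Rightarrow> 'a set set \<Rightarrow> nat \<Rightarrow> 'a \<Rightarrow> 'a set" where
  "disk V E r x = {u \<in> V. gdist V E u x \<le> r}"

definition disk_set :: "'a set \<Rightarrow> 'a set set \<Rightarrow> nat \<Rightarrow> 'a set \<Rightarrow> 'a set" where
  "disk_set V E r S = (\<Union>x\<in>S. disk V E r x)"

definition tree_decomposition ::
  "'a set \<Rightarrow> 'a set set \<Rightarrow> ('i \<Rightarrow> 'a set) \<Rightarrow> 'i set \<Rightarrow> 'i set set \<Rightarrow> bool" where
  "tree_decomposition V E X I F \<longleftrightarrow>
     is_tree I F \<and> (\<forall>i\<in>I. X i \<subseteq> V) \<and>
     (\<Union>i\<in>I. X i) = V \<and>
     (\<forall>e\<in>E. \<exists>i\<in>I. e \<subseteq> X i) \<and>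
     (\<forall>v\<in>V. connected_on F {i \<in> I. v \<in> X i})"

definition td_width :: "('i \<Rightarrow> 'a set) \<Rightarrow> 'i set \<Rightarrow> int" where
  "td_width X I = int (Max ((\<lambda>i. card (X i)) ` I)) - 1"

text \<open>Tree-width: minimum width over all tree-decompositions (index sets taken
  in nat; every finite tree can be re-indexed by naturals).\<close>
definition treewidth :: "'a set \<Rightarrow> 'a set set \<Rightarrow> int" where
  "treewidth V E = Min {w. \<exists>(X :: nat \<Rightarrow> 'a set) I F. tree_decomposition V E X I F \<and> td_width X I = w}"

definition k_breadth :: "'a set \<Rightarrow> 'a set set \<Rightarrow> nat \<Rightarrow> ('i \<Rightarrow> 'a set) \<Rightarrow> 'i set \<Rightarrow> nat" where
  "k_breadth V E k X I = (LEAST r. \<forall>i\<in>I. \<exists>C. C \<subseteq> V \<and> card C \<le> k \<and> X i \<subseteq> (\<Union>c\<in>C. disk V E r c))"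

end

theory Submission
  imports Defs
begin

text \<open>Each bag X i has at most k vertices and D_r(X i) is by definition the union of the
  radius-r disks around them, which gives the breadth bound. Enlarging bags keeps the cover and
  edge axioms, so only the subtree axiom needs work. Fix v and a vertex u with d(v,u) \<le> r, and
  take a shortest walk from v to u: every vertex on it is within distance r of v, the bags
  containing a given vertex form a subtree, and consecutive vertices share a bag. Hence the bags
  containing some vertex of the walk form a connected set through a bag of v, and the enlarged
  bags containing v are the union of these sets over all such u.\<close>

lemma is_walk_Nil [simp]: "\<not> is_walk E []"
  by (simp add: is_walk_def)

lemma is_walk_singleton [simp]: "is_walk E [x]"
  by (simp add: is_walk_def)

lemma is_walk_Cons_Cons [simp]:
  "is_walk E (x # y # xs) \<longleftrightarrow> {x, y} \<in> E \<and> is_walk E (y # xs)"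
  unfolding is_walk_def
proof safe
  fix j
  assume "\<forall>j. Suc j < length (x # y # xs) \<longrightarrow> {(x # y # xs) ! j, (x # y # xs) ! Suc j} \<in> E"
    and "Suc j < length (y # xs)"
  then show "{(y # xs) ! j, (y # xs) ! Suc j} \<in> E"
    by (metis Suc_less_eq length_Cons nth_Cons_Suc)
next
  fix j
  assume "{x, y} \<in> E" and "\<forall>j. Suc j < length (y # xs) \<longrightarrow> {(y # xs) ! j, (y # xs) ! Suc j} \<in> E"
    and "Suc j < length (x # y # xs)"
  then show "{(x # y # xs) ! j, (x # y # xs) ! Suc j} \<in> E"
    by (cases j) auto
qed auto

lemma is_walk_append:
  "is_walk E xs \<Longrightarrow> is_walk E ys \<Longrightarrow> last xs = hd ys \<Longrightarrow> is_walk E (xs @ tl ys)"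
proof (induction xs rule: induct_list012)
  case (2 x)
  then show ?case by (cases ys) auto
next
  case (3 x y zs)
  then show ?case by simp
qed simp

lemma is_walk_take: "is_walk E xs \<Longrightarrow> 0 < n \<Longrightarrow> is_walk E (take n xs)"
  unfolding is_walk_def by auto

lemma connected_on_starI:
  assumes "\<And>a. a \<in> S \<Longrightarrow> \<exists>W \<subseteq> S. connected_on F W \<and> c \<in> W \<and> a \<in> W"
  shows "connected_on F S"
  unfolding connected_on_def
proof (intro ballI)
  fix a b assume "a \<in> S" "b \<in> S"
  obtain A where "A \<subseteq> S" "connected_on F A" "c \<in> A" "a \<in> A"
    using assms \<open>a \<in> S\<close> by blast
  obtain B where "B \<subseteq> S" "connected_on F B" "c \<in> B" "b \<in> B"
    using assms \<open>b \<in> S\<close> by blast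
  obtain xs where xs: "is_walk F xs" "set xs \<subseteq> A" "hd xs = a" "last xs = c"
    using \<open>connected_on F A\<close> \<open>c \<in> A\<close> \<open>a \<in> A\<close> unfolding connected_on_def by blast
  obtain ys where ys: "is_walk F ys" "set ys \<subseteq> B" "hd ys = c" "last ys = b"
    using \<open>connected_on F B\<close> \<open>c \<in> B\<close> \<open>b \<in> B\<close> unfolding connected_on_def by blast
  obtain y ys' where ys_eq: "ys = y # ys'" using ys(1) by (cases ys) auto
  have "xs \<noteq> []" using xs(1) by auto
  let ?zs = "xs @ ys'"
  have "is_walk F ?zs" using is_walk_append[OF xs(1) ys(1)] xs(4) ys(3) ys_eq by simp
  moreover have "set ?zs \<subseteq> S" using xs(2) ys(2) \<open>A \<subseteq> S\<close> \<open>B \<subseteq> S\<close> ys_eq by auto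
  moreover have "hd ?zs = a" using \<open>xs \<noteq> []\<close> xs(3) by simp
  moreover have "last ?zs = b" using xs(4) ys(3,4) ys_eq by (cases ys') auto
  ultimately show "\<exists>zs. is_walk F zs \<and> set zs \<subseteq> S \<and> hd zs = a \<and> last zs = b" by blast
qed

lemma connected_on_Un:
  assumes "connected_on F A" "connected_on F B" "c \<in> A" "c \<in> B"
  shows "connected_on F (A \<union> B)"
  by (rule connected_on_starI[of _ _ c]) (use assms in blast)

lemma gdist_le_walk:
  assumes "is_walk E xs" "set xs \<subseteq> V"
  shows "gdist V E (hd xs) (last xs) \<le> length xs - 1"
  unfolding gdist_def
proof (rule Least_le)
  show "\<exists>ys. is_walk E ys \<and> set ys \<subseteq> V \<and> hd ys = hd xs \<and> last ys = last xs
      \<and> length ys = Suc (length xs - 1)"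
    using assms by (intro exI[of _ xs]) (cases xs, auto)
qed

lemma gdist_le_on_walk:
  assumes "is_walk E xs" "set xs \<subseteq> V" "u \<in> set xs"
  shows "gdist V E (hd xs) u \<le> length xs - 1"
proof -
  obtain j where j: "j < length xs" "xs ! j = u" using assms(3) by (auto simp: in_set_conv_nth)
  let ?ys = "take (Suc j) xs"
  have "gdist V E (hd ?ys) (last ?ys) \<le> length ?ys - 1"
    using assms(1,2) set_take_subset[of "Suc j" xs] by (intro gdist_le_walk is_walk_take) auto
  moreover have "hd ?ys = hd xs" by (simp add: hd_take)
  moreover have "last ?ys = u" using j by (simp add: take_Suc_conv_app_nth)
  ultimately show ?thesis using j(1) by simp
qed

lemma shortest_walk_exists:
  assumes "connected_on E V" "v \<in> V" "u \<in> V"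
  obtains xs where "is_walk E xs" "set xs \<subseteq> V" "hd xs = v" "last xs = u"
    "length xs = Suc (gdist V E v u)"
proof -
  obtain xs where xs: "is_walk E xs" "set xs \<subseteq> V" "hd xs = v" "last xs = u"
    using assms unfolding connected_on_def by blast
  then have "length xs = Suc (length xs - 1)" by (cases xs) auto
  with xs have "\<exists>n xs. is_walk E xs \<and> set xs \<subseteq> V \<and> hd xs = v \<and> last xs = u \<and> length xs = Suc n"
    by (intro exI[of _ "length xs - 1"] exI[of _ xs]) simp
  then have "\<exists>xs. is_walk E xs \<and> set xs \<subseteq> V \<and> hd xs = v \<and> last xs = u
      \<and> length xs = Suc (gdist V E v u)"
    unfolding gdist_def by (rule LeastI_ex)
  with that show ?thesis by blast
qed

lemma gdist_self: "v \<in> V \<Longrightarrow> gdist V E v v = 0"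
  unfolding gdist_def by (rule Least_eq_0) (auto intro!: exI[of _ "[v]"])

lemma mem_disk_set: "v \<in> disk_set V E r S \<longleftrightarrow> v \<in> V \<and> (\<exists>u\<in>S. gdist V E v u \<le> r)"
  by (auto simp: disk_set_def disk_def)

lemma subset_disk_set:
  assumes "S \<subseteq> V" shows "S \<subseteq> disk_set V E r S"
proof
  fix x assume "x \<in> S"
  with assms have "x \<in> V" "gdist V E x x = 0" by (auto simp: gdist_self)
  with \<open>x \<in> S\<close> show "x \<in> disk_set V E r S" by (auto simp: mem_disk_set intro: bexI[of _ x])
qed

definition bags_containing :: "('i \<Rightarrow> 'a set) \<Rightarrow> 'i set \<Rightarrow> 'a \<Rightarrow> 'i set" where
  "bags_containing X I u = {i \<in> I. u \<in> X i}"

lemma connected_on_bags_along_walk: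
  assumes td: "tree_decomposition V E X I F"
  shows "is_walk E xs \<Longrightarrow> set xs \<subseteq> V \<Longrightarrow> connected_on F (\<Union>u\<in>set xs. bags_containing X I u)"
proof (induction xs rule: induct_list012)
  case (2 x)
  then show ?case using td by (simp add: tree_decomposition_def bags_containing_def)
next
  case (3 x y zs)
  obtain c where "c \<in> I" "{x, y} \<subseteq> X c" using td "3.prems" unfolding tree_decomposition_def by auto
  then have "c \<in> bags_containing X I x" "c \<in> (\<Union>u\<in>set (y # zs). bags_containing X I u)"
    by (auto simp: bags_containing_def)
  moreover have "connected_on F (bags_containing X I x)"
    using td "3.prems" by (simp add: tree_decomposition_def bags_containing_def)
  moreover have "connected_on F (\<Union>u\<in>set (y # zs). bags_containing X I u)"
    using "3.IH"(2) "3.prems" by simp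
  ultimately have "connected_on F (bags_containing X I x \<union> (\<Union>u\<in>set (y # zs). bags_containing X I u))"
    using connected_on_Un by metis
  then show ?case by simp
qed simp

lemma connected_on_disk_set_bags:
  assumes td: "tree_decomposition V E X I F" and "connected_on E V" "v \<in> V"
  shows "connected_on F {i \<in> I. v \<in> disk_set V E r (X i)}" (is "connected_on F ?S")
proof -
  obtain c where c: "c \<in> I" "v \<in> X c" using td \<open>v \<in> V\<close> unfolding tree_decomposition_def by blast
  show ?thesis
  proof (rule connected_on_starI[of _ _ c])
    fix a assume "a \<in> ?S"
    then obtain u where u: "u \<in> X a" "gdist V E v u \<le> r" "a \<in> I" by (auto simp: mem_disk_set)
    have "u \<in> V" using td u unfolding tree_decomposition_def by blast
    then obtain p where p: "is_walk E p" "set p \<subseteq> V" "hd p = v" "last p = u"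
      "length p = Suc (gdist V E v u)"
      by (rule shortest_walk_exists[OF assms(2,3)])
    let ?W = "\<Union>w\<in>set p. bags_containing X I w"
    have "?W \<subseteq> ?S"
    proof
      fix i assume "i \<in> ?W"
      then obtain w where "w \<in> set p" "w \<in> X i" "i \<in> I" by (auto simp: bags_containing_def)
      moreover have "gdist V E v w \<le> r" using gdist_le_on_walk[OF p(1,2) \<open>w \<in> set p\<close>] p u by simp
      ultimately show "i \<in> ?S" using \<open>v \<in> V\<close> by (auto simp: mem_disk_set)
    qed
    moreover have "p \<noteq> []" using p(1) by auto
    then have "v \<in> set p" "u \<in> set p" using p(3,4) by auto
    then have "c \<in> ?W" "a \<in> ?W" using c u by (auto simp: bags_containing_def)
    ultimately show "\<exists>W \<subseteq> ?S. connected_on F W \<and> c \<in> W \<and> a \<in> W"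
      using connected_on_bags_along_walk[OF td p(1,2)] by blast
  qed
qed

lemma tree_decomposition_disk_set:
  assumes td: "tree_decomposition V E X I F" and "connected_on E V"
  shows "tree_decomposition V E (\<lambda>i. disk_set V E r (X i)) I F"
proof -
  have tree: "is_tree I F" and XV: "\<forall>i\<in>I. X i \<subseteq> V" and cover: "(\<Union>i\<in>I. X i) = V"
    and edges: "\<forall>e\<in>E. \<exists>i\<in>I. e \<subseteq> X i"
    using td unfolding tree_decomposition_def by blast+
  have grow: "X i \<subseteq> disk_set V E r (X i)" if "i \<in> I" for i
    using XV that by (simp add: subset_disk_set)
  have bound: "\<forall>i\<in>I. disk_set V E r (X i) \<subseteq> V" by (auto simp: mem_disk_set)
  have "(\<Union>i\<in>I. disk_set V E r (X i)) = V"
  proof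
    show "(\<Union>i\<in>I. disk_set V E r (X i)) \<subseteq> V" using bound by blast
    have "V = (\<Union>i\<in>I. X i)" using cover by simp
    also have "\<dots> \<subseteq> (\<Union>i\<in>I. disk_set V E r (X i))" using grow by (rule UN_mono[OF order_refl])
    finally show "V \<subseteq> (\<Union>i\<in>I. disk_set V E r (X i))" .
  qed
  moreover have "\<forall>e\<in>E. \<exists>i\<in>I. e \<subseteq> disk_set V E r (X i)"
    using edges grow by (meson order_trans)
  moreover have "\<forall>v\<in>V. connected_on F {i \<in> I. v \<in> disk_set V E r (X i)}"
    using connected_on_disk_set_bags[OF td assms(2)] by blast
  ultimately show ?thesis using tree bound by (simp add: tree_decomposition_def)
qed

lemma card_bag_le_of_td_width:
  assumes "finite I" "i \<in> I" "td_width X I = int k - 1"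
  shows "card (X i) \<le> k"
proof -
  have "Max ((\<lambda>i. card (X i)) ` I) = k" using assms(3) by (simp add: td_width_def)
  then show ?thesis using assms(1,2) by (metis Max_ge finite_imageI image_eqI)
qed

lemma k_breadth_disk_set_le:
  assumes td: "tree_decomposition V E X I F" and "td_width X I = int k - 1"
  shows "k_breadth V E k (\<lambda>i. disk_set V E r (X i)) I \<le> r"
  unfolding k_breadth_def
proof (rule Least_le, intro ballI exI conjI)
  fix i assume "i \<in> I"
  have "finite I" using td by (simp add: tree_decomposition_def is_tree_def conn_graph_def)
  then show "card (X i) \<le> k" using \<open>i \<in> I\<close> assms(2) by (rule card_bag_le_of_td_width)
  show "X i \<subseteq> V" using td \<open>i \<in> I\<close> by (auto simp: tree_decomposition_def)
  show "disk_set V E r (X i) \<subseteq> (\<Union>c\<in>X i. disk V E r c)" by (simp add: disk_set_def)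
qed

theorem lemma14:
  fixes V :: "'a set" and E :: "'a set set" and X :: "'i \<Rightarrow> 'a set"
    and I :: "'i set" and F :: "'i set set" and k r :: nat
  assumes "conn_graph V E"
    and "treewidth V E = int k - 1"
    and "tree_decomposition V E X I F"
    and "td_width X I = int k - 1"
  shows "tree_decomposition V E (\<lambda>i. disk_set V E r (X i)) I F
         \<and> k_breadth V E k (\<lambda>i. disk_set V E r (X i)) I \<le> r"
  using tree_decomposition_disk_set[OF assms(3)] k_breadth_disk_set_le[OF assms(3,4)] assms(1)
  by (simp add: conn_graph_def)

end
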